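(* Let $\mathfrak{n}$ be the real $7$-dimensional Lie algebra with basis $e_1,\dots,e_7$ whose nonzero brackets (up to antisymmetry) are $[e_1,e_2]=e_4$, $[e_1,e_4]=e_5$, $[e_1,e_5]=e_6$, $[e_1,e_6]=e_7$, $[e_2,e_3]=e_7$, $[e_2,e_4]=e_6$, $[e_2,e_5]=e_7$. Then $\mathfrak{n}$ is an Einstein nilradical.
   Context: A real nilpotent Lie algebra $\mathfrak{n}$ is called an Einstein nilradical if it admits an inner product such that the left-invariant Riemannian metric it defines on the simply connected nilpotent Lie group with Lie algebra $\mathfrak{n}$ is a nilsoliton, i.e. its Ricci operator satisfies $\mathrm{Ric}=c\,\mathrm{Id}+D$ for some $c\in\mathbb{R}$ and some derivation $D$ of $\mathfrak{n}$. Brackets of basis elements not listed are zero. *)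

theory Defs
  imports "HOL-Analysis.Analysis"
begin

text \<open>Generic Riemannian geometry of a left-invariant metric on a Lie group,
  expressed on the Lie algebra V = real^'n with bracket br and inner product
  given by a symmetric positive definite Gram matrix g.\<close>

definition is_inner_product :: "real^'n^'n \<Rightarrow> bool" where
  "is_inner_product g \<longleftrightarrow> transpose g = g \<and> (\<forall>x. x \<noteq> 0 \<longrightarrow> x \<bullet> (g *v x) > 0)"

definition ip :: "real^'n^'n \<Rightarrow> real^'n \<Rightarrow> real^'n \<Rightarrow> real" where
  "ip g x y = x \<bullet> (g *v y)"

text \<open>Levi-Civita connection on left-invariant fields (Koszul formula):
  2 g(nabla_X Y, Z) = g([X,Y],Z) - g([Y,Z],X) + g([Z,X],Y).\<close>
definition lc_nabla :: "(real^'n \<Rightarrow> real^'n \<Rightarrow> real^'n) \<Rightarrow> real^'n^'n \<Rightarrow> real^'n \<Rightarrow> real^'n \<Rightarrow> real^'n" where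
  "lc_nabla br g X Y = (THE w. \<forall>Z. ip g w Z =
      (ip g (br X Y) Z - ip g (br Y Z) X + ip g (br Z X) Y) / 2)"

definition curv :: "(real^'n \<Rightarrow> real^'n \<Rightarrow> real^'n) \<Rightarrow> real^'n^'n \<Rightarrow> real^'n \<Rightarrow> real^'n \<Rightarrow> real^'n \<Rightarrow> real^'n" where
  "curv br g X Y Z = lc_nabla br g X (lc_nabla br g Y Z) - lc_nabla br g Y (lc_nabla br g X Z)
     - lc_nabla br g (br X Y) Z"

definition ricci_tensor :: "(real^'n \<Rightarrow> real^'n \<Rightarrow> real^'n) \<Rightarrow> real^'n^'n \<Rightarrow> real^'n \<Rightarrow> real^'n \<Rightarrow> real" where
  "ricci_tensor br g X Y = (\<Sum>k\<in>UNIV. (curv br g (axis k 1) X Y) $ k)"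

definition ricci_op :: "(real^'n \<Rightarrow> real^'n \<Rightarrow> real^'n) \<Rightarrow> real^'n^'n \<Rightarrow> real^'n \<Rightarrow> real^'n" where
  "ricci_op br g X = (THE w. \<forall>Y. ip g w Y = ricci_tensor br g X Y)"

definition is_derivation :: "(real^'n \<Rightarrow> real^'n \<Rightarrow> real^'n) \<Rightarrow> (real^'n \<Rightarrow> real^'n) \<Rightarrow> bool" where
  "is_derivation br D \<longleftrightarrow> linear D \<and> (\<forall>X Y. D (br X Y) = br (D X) Y + br X (D Y))"

definition is_nilsoliton :: "(real^'n \<Rightarrow> real^'n \<Rightarrow> real^'n) \<Rightarrow> real^'n^'n \<Rightarrow> bool" where
  "is_nilsoliton br g \<longleftrightarrow> (\<exists>c D. is_derivation br D \<and> (\<forall>X. ricci_op br g X = c *\<^sub>R X + D X))"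

definition einstein_nilradical :: "(real^'n \<Rightarrow> real^'n \<Rightarrow> real^'n) \<Rightarrow> bool" where
  "einstein_nilradical br \<longleftrightarrow> (\<exists>g. is_inner_product g \<and> is_nilsoliton br g)"

datatype idx7 = E1 | E2 | E3 | E4 | E5 | E6 | E7

lemma UNIV_idx7: "(UNIV :: idx7 set) = {E1, E2, E3, E4, E5, E6, E7}"
  using idx7.exhaust by auto

instance idx7 :: finite
  by standard (simp add: UNIV_idx7)

abbreviation ev :: "idx7 \<Rightarrow> real^idx7" where
  "ev i \<equiv> axis i 1"

fun br_basis :: "idx7 \<Rightarrow> idx7 \<Rightarrow> real^idx7" where
  "br_basis E1 E2 = ev E4"
| "br_basis E2 E1 = - ev E4"
| "br_basis E1 E4 = ev E5"
| "br_basis E4 E1 = - ev E5"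
| "br_basis E1 E5 = ev E6"
| "br_basis E5 E1 = - ev E6"
| "br_basis E1 E6 = ev E7"
| "br_basis E6 E1 = - ev E7"
| "br_basis E2 E3 = ev E7"
| "br_basis E3 E2 = - ev E7"
| "br_basis E2 E4 = ev E6"
| "br_basis E4 E2 = - ev E6"
| "br_basis E2 E5 = ev E7"
| "br_basis E5 E2 = - ev E7"
| "br_basis _ _ = 0"

definition br7 :: "real^idx7 \<Rightarrow> real^idx7 \<Rightarrow> real^idx7" where
  "br7 x y = (\<Sum>i\<in>UNIV. \<Sum>j\<in>UNIV. (x $ i * y $ j) *\<^sub>R br_basis i j)"

end

theory Submission
  imports Defs
begin

text \<open>The nilsoliton metric is given explicitly; it is not diagonal in the given basis
  (e3 and e5 are not orthogonal). Its Levi-Civita connection is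
  read off from the Koszul formula, and with it the Ricci operator turns out to be
  c Id + D, where D scales e1, ..., e7 by multiples of the weights 1, 2, 4, 3, 4, 5, 6.
  Since these weights add up along every nonzero bracket, D is a derivation.\<close>

lemma ip_diff_left: "ip g (v - w) z = ip g v z - ip g w z"
  by (simp add: ip_def inner_diff_left)

lemma ip_representer_unique:
  assumes "is_inner_product g" and "\<forall>z. ip g v z = ip g w z"
  shows "v = w"
proof (rule ccontr)
  assume "v \<noteq> w"
  then have "ip g (v - w) (v - w) > 0"
    using assms(1) by (simp add: is_inner_product_def ip_def)
  moreover have "ip g (v - w) (v - w) = 0"
    using assms(2) by (simp add: ip_diff_left)
  ultimately show False by simp
qed

lemma the_ip_representer:
  assumes "is_inner_product g" and "\<forall>z. ip g v z = f z"
  shows "(THE w. \<forall>z. ip g w z = f z) = v"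
proof (rule the_equality)
  show "\<forall>z. ip g v z = f z" using assms(2) .
  show "w = v" if "\<forall>z. ip g w z = f z" for w
    using ip_representer_unique[OF assms(1)] assms(2) that by simp
qed

lemma lc_nabla_eqI:
  assumes "is_inner_product g"
    and "\<forall>z. ip g w z = (ip g (br x y) z - ip g (br y z) x + ip g (br z x) y) / 2"
  shows "lc_nabla br g x y = w"
  unfolding lc_nabla_def using assms by (rule the_ip_representer)

lemma ricci_op_eqI:
  assumes "is_inner_product g" and "\<forall>y. ip g w y = ricci_tensor br g x y"
  shows "ricci_op br g x = w"
  unfolding ricci_op_def using assms by (rule the_ip_representer)

lemma einstein_nilradicalI:
  assumes "is_inner_product g" and "is_derivation br D"
    and "\<And>x y. ricci_tensor br g x y = ip g (c *\<^sub>R x + D x) y"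
  shows "einstein_nilradical br"
  unfolding einstein_nilradical_def is_nilsoliton_def
  using assms ricci_op_eqI by metis

definition vec7 :: "real \<Rightarrow> real \<Rightarrow> real \<Rightarrow> real \<Rightarrow> real \<Rightarrow> real \<Rightarrow> real \<Rightarrow> real^idx7" where
  "vec7 a b c d e f g =
     (\<chi> i. case i of E1 \<Rightarrow> a | E2 \<Rightarrow> b | E3 \<Rightarrow> c | E4 \<Rightarrow> d | E5 \<Rightarrow> e | E6 \<Rightarrow> f | E7 \<Rightarrow> g)"

lemma vec7_nth [simp]:
  "vec7 a b c d e f g $ E1 = a" "vec7 a b c d e f g $ E2 = b" "vec7 a b c d e f g $ E3 = c"
  "vec7 a b c d e f g $ E4 = d" "vec7 a b c d e f g $ E5 = e" "vec7 a b c d e f g $ E6 = f"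
  "vec7 a b c d e f g $ E7 = g"
  by (simp_all add: vec7_def)

lemma sum_idx7: "(\<Sum>i\<in>UNIV. f i) = f E1 + f E2 + f E3 + f E4 + f E5 + f E6 + (f E7 :: real)"
  by (simp add: UNIV_idx7)

lemma br7_eq:
  "br7 x y = vec7 0 0 0 (x$E1*y$E2 - x$E2*y$E1) (x$E1*y$E4 - x$E4*y$E1)
     (x$E1*y$E5 - x$E5*y$E1 + x$E2*y$E4 - x$E4*y$E2)
     (x$E1*y$E6 - x$E6*y$E1 + x$E2*y$E3 - x$E3*y$E2 + x$E2*y$E5 - x$E5*y$E2)"
  unfolding vec_eq_iff br7_def
  by (intro allI, case_tac i) (simp_all add: sum_idx7 axis_def algebra_simps)

fun gram7 :: "idx7 \<Rightarrow> idx7 \<Rightarrow> real" where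
  "gram7 E1 E1 = 847" | "gram7 E2 E2 = 726" | "gram7 E3 E3 = 855" | "gram7 E3 E5 = 315"
| "gram7 E5 E3 = 315" | "gram7 E4 E4 = 495" | "gram7 E5 E5 = 585" | "gram7 E6 E6 = 405"
| "gram7 E7 E7 = 405" | "gram7 _ _ = 0"

definition g7 :: "real^idx7^idx7" where
  "g7 = (\<chi> i j. gram7 i j)"

lemma ip_g7:
  "ip g7 x y = 847*x$E1*y$E1 + 726*x$E2*y$E2 + 855*x$E3*y$E3 + 315*x$E3*y$E5
     + 315*x$E5*y$E3 + 495*x$E4*y$E4 + 585*x$E5*y$E5 + 405*x$E6*y$E6 + 405*x$E7*y$E7"
  unfolding ip_def inner_vec_def matrix_vector_mult_def g7_def
  by (simp add: sum_idx7 algebra_simps)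

lemma ip_g7_self:
  "ip g7 x x = 847*(x$E1)^2 + 726*(x$E2)^2 + 540*(x$E3)^2 + 315*(x$E3 + x$E5)^2
     + 270*(x$E5)^2 + 495*(x$E4)^2 + 405*(x$E6)^2 + 405*(x$E7)^2"
  by (simp add: ip_g7 power2_eq_square algebra_simps)

lemma ip_g7_self_pos:
  assumes "x \<noteq> 0"
  shows "ip g7 x x > 0"
proof -
  obtain i where "x $ i \<noteq> 0"
    using assms by (auto simp: vec_eq_iff)
  then have "(x$E1)^2 + (x$E2)^2 + (x$E3)^2 + (x$E4)^2 + (x$E5)^2 + (x$E6)^2 + (x$E7)^2 > 0"
    by (cases i) (simp_all add: add_pos_nonneg add_nonneg_pos)
  moreover have "(x$E3 + x$E5)^2 \<ge> 0" by simp
  ultimately show ?thesis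
    unfolding ip_g7_self by (smt (verit) zero_le_power2)
qed

lemma is_inner_product_g7: "is_inner_product g7"
  unfolding is_inner_product_def
proof
  have "gram7 i j = gram7 j i" for i j
    by (cases i; cases j) simp_all
  then show "transpose g7 = g7"
    by (simp add: vec_eq_iff transpose_def g7_def)
  show "\<forall>x. x \<noteq> 0 \<longrightarrow> 0 < x \<bullet> (g7 *v x)"
    using ip_g7_self_pos unfolding ip_def by blast
qed

definition nabla7 :: "real^idx7 \<Rightarrow> real^idx7 \<Rightarrow> real^idx7" where
  "nabla7 X Y = vec7
   ((45/154)*X$E2*Y$E4 + (45/242)*X$E3*Y$E4 + (45/154)*X$E4*Y$E2 + (45/242)*X$E4*Y$E3
      + (585/1694)*X$E4*Y$E5 + (585/1694)*X$E5*Y$E4 + (405/1694)*X$E5*Y$E6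
      + (405/1694)*X$E6*Y$E5 + (405/1694)*X$E6*Y$E7 + (405/1694)*X$E7*Y$E6)
   ((-15/44)*X$E1*Y$E4 + (135/484)*X$E3*Y$E7 + (-15/44)*X$E4*Y$E1 + (135/484)*X$E4*Y$E6
      + (135/484)*X$E5*Y$E7 + (135/484)*X$E6*Y$E4 + (135/484)*X$E7*Y$E3
      + (135/484)*X$E7*Y$E5)
   ((7/44)*X$E1*Y$E6 + (-3/22)*X$E2*Y$E7 + (7/44)*X$E6*Y$E1 + (-3/22)*X$E7*Y$E2)
   ((1/2)*X$E1*Y$E2 + (-7/22)*X$E1*Y$E3 + (-13/22)*X$E1*Y$E5 + (-1/2)*X$E2*Y$E1
      + (-9/22)*X$E2*Y$E6 + (-7/22)*X$E3*Y$E1 + (-13/22)*X$E5*Y$E1 + (-9/22)*X$E6*Y$E2)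
   ((1/2)*X$E1*Y$E4 + (-19/44)*X$E1*Y$E6 + (-3/11)*X$E2*Y$E7 + (-1/2)*X$E4*Y$E1
      + (-19/44)*X$E6*Y$E1 + (-3/11)*X$E7*Y$E2)
   ((1/2)*X$E1*Y$E5 + (-1/2)*X$E1*Y$E7 + (1/2)*X$E2*Y$E4 + (-1/2)*X$E4*Y$E2
      + (-1/2)*X$E5*Y$E1 + (-1/2)*X$E7*Y$E1)
   ((1/2)*X$E1*Y$E6 + (1/2)*X$E2*Y$E3 + (1/2)*X$E2*Y$E5 + (-1/2)*X$E3*Y$E2
      + (-1/2)*X$E5*Y$E2 + (-1/2)*X$E6*Y$E1)"

lemma lc_nabla_br7_g7: "lc_nabla br7 g7 X Y = nabla7 X Y"
  by (rule lc_nabla_eqI[OF is_inner_product_g7], intro allI,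
      simp only: ip_g7 br7_eq nabla7_def vec7_nth, algebra)

fun weight7 :: "idx7 \<Rightarrow> real" where
  "weight7 E1 = 1" | "weight7 E2 = 2" | "weight7 E3 = 4" | "weight7 E4 = 3"
| "weight7 E5 = 4" | "weight7 E6 = 5" | "weight7 E7 = 6"

definition weight_scaling :: "real \<Rightarrow> real^idx7 \<Rightarrow> real^idx7" where
  "weight_scaling t X = (\<chi> i. t * weight7 i * X $ i)"

lemma weight_scaling_eq:
  "weight_scaling t X = vec7 (t * X$E1) (2*t * X$E2) (4*t * X$E3) (3*t * X$E4)
     (4*t * X$E5) (5*t * X$E6) (6*t * X$E7)"
  unfolding weight_scaling_def vec_eq_iff by (intro allI, case_tac i) simp_all

lemma is_derivation_weight_scaling: "is_derivation br7 (weight_scaling t)"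
  unfolding is_derivation_def
proof (intro conjI allI)
  show "linear (weight_scaling t)"
    by (rule linearI) (simp_all add: weight_scaling_def vec_eq_iff algebra_simps)
  fix X Y
  show "weight_scaling t (br7 X Y) = br7 (weight_scaling t X) Y + br7 X (weight_scaling t Y)"
    unfolding vec_eq_iff
    by (intro allI, case_tac i) (simp_all add: weight_scaling_eq br7_eq algebra_simps)
qed

lemma ricci_tensor_br7_g7:
  "ricci_tensor br7 g7 X Y = ip g7 ((-107/37268) *\<^sub>R X + weight_scaling (25/37268) X) Y"
  unfolding ricci_tensor_def sum_idx7 curv_def lc_nabla_br7_g7
  by (simp add: nabla7_def br7_eq ip_g7 weight_scaling_eq axis_def, algebra)

theorem mainTheorem10:
  shows "einstein_nilradical br7"
  using is_inner_product_g7 is_derivation_weight_scaling ricci_tensor_br7_g7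
  by (rule einstein_nilradicalI)

end
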